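(* Consider the setting and the algorithm described in the context (with its parameters $0<\beta<2$, $\nu>0$, $0<q<1$, $\delta_0>0$, $\theta_0>0$, $\gamma_0=1$, $\varepsilon>0$). Then: (i) $\|z^{k+1}\|\le \ell+1$ for all $k\ge 0$; (ii) in every iteration, the search for the smallest $j_k\in\{0,1,2,\dots\}$ with $\theta_{k+1}>0$ terminates after finitely many steps, so the algorithm is well defined; moreover $\gamma_{k+1}\le\gamma_k$ for all $k\ge0$; (iii) there exist a constant $\gamma>0$ and an index $K_0\ge 0$ such that for all $k\ge K_0$: $\gamma_k=\gamma$, $\delta_k=\delta:=2\nu+L_{\nabla h}+\frac{2\|A\|^2}{\gamma}$, and $\|z^{k+1}\|\le\min\left(\frac{\varepsilon}{\gamma},\sqrt{\frac{2\varepsilon}{\gamma}}\right)$.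
   Context: Setting: $\mathcal{S}\subseteq\mathbb{R}^n$ is nonempty, convex and compact; $A:\mathbb{R}^n\to\mathbb{R}^s$ and $K:\mathbb{R}^n\to\mathbb{R}^p$ are linear with adjoints $A^*,K^*$ and operator norms $\|A\|,\|K\|$; $g:\mathbb{R}^s\to\mathbb{R}\cup\{+\infty\}$ is proper, convex, lower semicontinuous; $h:\mathbb{R}^n\to\mathbb{R}$ is differentiable on an open set containing $\mathcal{S}$ with $\nabla h$ Lipschitz there with constant $L_{\nabla h}$; $f:\mathbb{R}^p\to\mathbb{R}\cup\{+\infty\}$ is proper, convex, lower semicontinuous with $K(\mathcal{S})\subseteq\operatorname{int}(\operatorname{dom}f)$ and $f(Kx)>0$ for all $x\in\mathcal{S}$; $\mathcal{S}\cap A^{-1}(\operatorname{dom}g)\neq\emptyset$ and $\alpha:=\inf_{x\in\mathcal{S}}\{g(Ax)+h(x)\}>0$. Moreover $A(\mathcal{S})\subseteq\operatorname{dom}(\partial g)$ and there is $\ell>0$ with $\operatorname{dist}(0,\partial g(Ax))\le\ell$ for all $x\in\mathcal{S}$. Notation: $g^*$ is the Fenchel conjugate of $g$; $\iota_{\mathcal{S}}$ the indicator function of $\mathcal{S}$; $\operatorname{Proj}_{\mathcal{S}}$ the Euclidean projection; for a proper convex lsc $\varphi$ and $\kappa>0$, $\operatorname{prox}_{\varphi,\kappa}(x)=\arg\min_y\{\varphi(y)+\frac{1}{2\kappa}\|y-x\|^2\}$. Define $\Psi(x,z,u,\delta,\gamma):=\langle z,Ax\rangle-g^*(z)+h(x)+\iota_{\mathcal{S}}(x)+\frac{\delta}{2}\|x-u\|^2-\frac{\gamma}{2}\|z\|^2$.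 Algorithm (Adaptive FSPS): given $0<\beta<2$, $\nu>0$, $0<q<1$, $\delta_0>0$, $\theta_0>0$, $\gamma_0=1$, $\varepsilon>0$ and a starting point $(x^0,z^0,u^0)$, for $k\ge0$: choose $y^{k+1}\in\partial f(Kx^k)$; set $x^{k+1}:=\operatorname{Proj}_{\mathcal{S}}\big(u^k+\frac{\theta_k}{\delta_k}K^*y^{k+1}-\frac1{\delta_k}\nabla h(x^k)-\frac1{\delta_k}A^*z^k\big)$; set $u^{k+1}:=(1-\beta)u^k+\beta x^{k+1}$; find the smallest $j_k\in\{0,1,2,\dots\}$ such that, with $\gamma_{k,j_k}:=\gamma_kq^{j_k}$ and $z^{k+1,j_k}:=\operatorname{prox}_{g^*,1/\gamma_{k,j_k}}(Ax^{k+1}/\gamma_{k,j_k})$, one has $\theta_{k+1}:=\Psi(x^{k+1},z^{k+1,j_k},u^{k+1},\delta_k,\gamma_{k,j_k})/f(Kx^{k+1})>0$; set $\gamma_{k+1}:=\gamma_{k,j_k}$, $\delta_{k+1}:=2\nu+L_{\nabla h}+2\|A\|^2/\gamma_{k+1}$, $z^{k+1}:=z^{k+1,j_k}$; if $\|z^{k+1}\|>\min(\varepsilon/\gamma_{k+1},\sqrt{2\varepsilon/\gamma_{k+1}})$, then replace $\gamma_{k+1}$ by $\gamma_{k+1}q$ and recompute $\delta_{k+1}:=2\nu+L_{\nabla h}+2\|A\|^2/\gamma_{k+1}$. *)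

theory Defs
  imports "HOL-Analysis.Analysis"
begin

definition proper_fun :: "('a \<Rightarrow> ereal) \<Rightarrow> bool" where
  "proper_fun f \<longleftrightarrow> (\<forall>x. f x \<noteq> -\<infinity>) \<and> (\<exists>x. f x \<noteq> \<infinity>)"

definition convex_fun :: "('a::real_vector \<Rightarrow> ereal) \<Rightarrow> bool" where
  "convex_fun f \<longleftrightarrow> convex {(x, r::real). f x \<le> ereal r}"

definition lsc_fun :: "('a::topological_space \<Rightarrow> ereal) \<Rightarrow> bool" where
  "lsc_fun f \<longleftrightarrow> (\<forall>x. f x \<le> Liminf (at x) f)"

definition fconj :: "('a::real_inner \<Rightarrow> ereal) \<Rightarrow> 'a \<Rightarrow> ereal" where
  "fconj g z = (SUP x. ereal (z \<bullet> x) - g x)"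

definition subdiff :: "('a::real_inner \<Rightarrow> ereal) \<Rightarrow> 'a \<Rightarrow> 'a set" where
  "subdiff f x = {v. f x < \<infinity> \<and> (\<forall>w. f x + ereal (v \<bullet> (w - x)) \<le> f w)}"

definition prox :: "('a::real_normed_vector \<Rightarrow> ereal) \<Rightarrow> real \<Rightarrow> 'a \<Rightarrow> 'a" where
  "prox phi \<kappa> x = (THE y. \<forall>w. phi y + ereal (norm (y - x) ^ 2 / (2 * \<kappa>))
                               \<le> phi w + ereal (norm (w - x) ^ 2 / (2 * \<kappa>)))"

definition fsps_Psi ::
  "'n::euclidean_space set \<Rightarrow> ('n \<Rightarrow> 's::euclidean_space) \<Rightarrow> ('s \<Rightarrow> ereal) \<Rightarrow> ('n \<Rightarrow> real)
   \<Rightarrow> 'n \<Rightarrow> 's \<Rightarrow> 'n \<Rightarrow> real \<Rightarrow> real \<Rightarrow> ereal" where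
  "fsps_Psi S A g h x z u \<delta> \<gamma> =
     (if x \<in> S then ereal (z \<bullet> A x) - fconj g z
        + ereal (h x + \<delta> / 2 * norm (x - u) ^ 2 - \<gamma> / 2 * norm z ^ 2)
      else \<infinity>)"

text \<open>The search index j_k is the least j with theta_{k+1} > 0 (the step is possible only
  if such a j exists).\<close>
definition fsps_step ::
  "'n::euclidean_space set \<Rightarrow> ('n \<Rightarrow> 's::euclidean_space) \<Rightarrow> ('n \<Rightarrow> 'p::euclidean_space)
   \<Rightarrow> ('s \<Rightarrow> ereal) \<Rightarrow> ('n \<Rightarrow> real) \<Rightarrow> ('n \<Rightarrow> 'n) \<Rightarrow> real \<Rightarrow> ('p \<Rightarrow> ereal)
   \<Rightarrow> real \<Rightarrow> real \<Rightarrow> real \<Rightarrow> real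
   \<Rightarrow> 'n \<Rightarrow> 's \<Rightarrow> 'n \<Rightarrow> real \<Rightarrow> real \<Rightarrow> real
   \<Rightarrow> 'n \<Rightarrow> 's \<Rightarrow> 'n \<Rightarrow> real \<Rightarrow> real \<Rightarrow> real \<Rightarrow> bool" where
  "fsps_step S A K g h gradh Lh f \<beta> \<nu> q \<epsilon> x z u \<gamma> \<delta> \<theta> x' z' u' \<gamma>' \<delta>' \<theta>' \<longleftrightarrow>
     (\<exists>y. y \<in> subdiff f (K x) \<and>
        x' = closest_point S (u + (\<theta> / \<delta>) *\<^sub>R adjoint K y - (1 / \<delta>) *\<^sub>R gradh x
                                - (1 / \<delta>) *\<^sub>R adjoint A z) \<and>
        u' = (1 - \<beta>) *\<^sub>R u + \<beta> *\<^sub>R x' \<and>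
        (let zc = (\<lambda>j::nat. prox (fconj g) (1 / (\<gamma> * q ^ j)) ((1 / (\<gamma> * q ^ j)) *\<^sub>R A x'));
             th = (\<lambda>j::nat. fsps_Psi S A g h x' (zc j) u' \<delta> (\<gamma> * q ^ j) / f (K x'));
             j = (LEAST j. 0 < th j);
             \<gamma>1 = \<gamma> * q ^ j
         in 0 < th j \<and> \<theta>' = real_of_ereal (th j) \<and> z' = zc j \<and>
            \<gamma>' = (if norm z' > min (\<epsilon> / \<gamma>1) (sqrt (2 * \<epsilon> / \<gamma>1)) then \<gamma>1 * q else \<gamma>1) \<and>
            \<delta>' = 2 * \<nu> + Lh + 2 * (onorm A) ^ 2 / \<gamma>'))"

end

theory Submission
  imports Defs
begin

text \<open>For \<open>v \<in> \<partial>g(A x)\<close> the dual point \<open>z = prox\<^bsub>g\<^sup>*,1/\<gamma>\<^esub>(A x / \<gamma>)\<close> maximises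
  \<open>\<langle>z, A x\<rangle> - g\<^sup>*(z) - \<gamma>/2 \<parallel>z\<parallel>\<^sup>2\<close>; comparing with \<open>v\<close>, where Fenchel-Young is an
  equality, gives \<open>\<parallel>z\<parallel> \<le> \<parallel>v\<parallel> < ell + 1\<close> and makes this dual objective at least
  \<open>g(A x) - \<gamma>/2 \<parallel>v\<parallel>\<^sup>2\<close>. Hence \<open>\<Psi> > 0\<close> as soon as \<open>\<gamma> (ell + 1)\<^sup>2 \<le> \<alpha>\<close>, so the
  backtracking over \<open>j\<close> stops, and below an explicit threshold neither the backtracking nor the
  safeguard on \<open>\<parallel>z\<parallel>\<close> changes \<open>\<gamma>\<close>. Every change multiplies \<open>\<gamma>\<close> by at most \<open>q\<close> and
  happens only above the threshold, so \<open>\<gamma>\<close> is eventually constant. Existence of a step also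
  needs a subgradient of \<open>f\<close> at \<open>K x\<close>, obtained by separating \<open>(K x, f(K x))\<close> from the strict
  epigraph.\<close>

section \<open>Subgradients and the Fenchel conjugate\<close>

lemma convex_strict_epigraph:
  assumes "proper_fun f" and "convex_fun f"
  shows "convex {(w, r::real). f w < ereal r}"
proof (rule convexI)
  fix x y :: "'a \<times> real" and u v :: real
  assume x: "x \<in> {(w, r). f w < ereal r}" and y: "y \<in> {(w, r). f w < ereal r}"
    and u: "0 \<le> u" and v: "0 \<le> v" and uv: "u + v = 1"
  obtain w1 r1 w2 r2 where xy: "x = (w1, r1)" "y = (w2, r2)" by fastforce
  have l1: "f w1 < ereal r1" and l2: "f w2 < ereal r2" using x y xy by auto
  obtain f1 where f1: "f w1 = ereal f1"
    using l1 \<open>proper_fun f\<close> by (cases "f w1") (auto simp: proper_fun_def)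
  obtain f2 where f2: "f w2 = ereal f2"
    using l2 \<open>proper_fun f\<close> by (cases "f w2") (auto simp: proper_fun_def)
  have "f (u *\<^sub>R w1 + v *\<^sub>R w2) \<le> ereal (u * f1 + v * f2)"
    using convexD[OF \<open>convex_fun f\<close>[unfolded convex_fun_def], of "(w1, f1)" "(w2, f2)" u v]
      f1 f2 u v uv by simp
  also have "ereal (u * f1 + v * f2) < ereal (u * r1 + v * r2)"
  proof -
    have "f1 < r1" "f2 < r2" using l1 l2 f1 f2 by auto
    then have "u * f1 \<le> u * r1" "v * f2 \<le> v * r2" using u v by (auto intro: mult_left_mono)
    moreover have "u * f1 < u * r1 \<or> v * f2 < v * r2"
      using \<open>f1 < r1\<close> \<open>f2 < r2\<close> u v uv by (cases "u = 0") auto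
    ultimately show ?thesis by auto
  qed
  finally show "u *\<^sub>R x + v *\<^sub>R y \<in> {(w, r). f w < ereal r}" using xy by simp
qed

lemma subgradient_of_nonvertical_support:
  fixes f :: "'a::real_inner \<Rightarrow> ereal"
  assumes "proper_fun f" and F: "f p = ereal F" and "0 < a0"
    and below: "a1 \<bullet> p + a0 * F \<le> b"
    and above: "\<And>w r. f w < ereal r \<Longrightarrow> b \<le> a1 \<bullet> w + a0 * r"
  shows "- (1 / a0) *\<^sub>R a1 \<in> subdiff f p"
  unfolding subdiff_def
proof (intro CollectI conjI allI)
  let ?v = "- (1 / a0) *\<^sub>R a1"
  show "f p < \<infinity>" using F by simp
  fix w
  show "f p + ereal (?v \<bullet> (w - p)) \<le> f w"
  proof (cases "f w")
    case (real fw)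
    have "F + ?v \<bullet> (w - p) \<le> fw + t" if "t > 0" for t
    proof -
      have "a0 * F - a1 \<bullet> (w - p) \<le> a0 * (fw + t)"
        using above[of w "fw + t"] below real that by (simp add: inner_diff_right algebra_simps)
      then show ?thesis
        using \<open>0 < a0\<close> by (simp add: field_simps)
    qed
    then have "F + ?v \<bullet> (w - p) \<le> fw" by (rule field_le_epsilon)
    then show ?thesis using F real by simp
  qed (use \<open>proper_fun f\<close> in \<open>auto simp: proper_fun_def\<close>)
qed

lemma subdiff_nonempty_interior_dom:
  fixes f :: "'a::euclidean_space \<Rightarrow> ereal"
  assumes "proper_fun f" and "convex_fun f" and p: "p \<in> interior {w. f w < \<infinity>}"
  shows "subdiff f p \<noteq> {}"
proof -
  have ninf: "\<And>w. f w \<noteq> -\<infinity>" using \<open>proper_fun f\<close> by (auto simp: proper_fun_def)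
  obtain e where e: "e > 0" "ball p e \<subseteq> {w. f w < \<infinity>}" using p mem_interior by blast
  then have "f p < \<infinity>" by (metis centre_in_ball mem_Collect_eq subsetD)
  then obtain F where F: "f p = ereal F"
    using ninf[of p] by (cases "f p") auto
  define T where "T = {(w, r::real). f w < ereal r}"
  have "(p, F + 1) \<in> T" and "(p, F) \<notin> T" using F by (auto simp: T_def)
  then obtain a b where "a \<noteq> 0" and below: "a \<bullet> (p, F) \<le> b" and above: "\<forall>x\<in>T. b \<le> a \<bullet> x"
    using separating_hyperplane_sets[OF convex_singleton convex_strict_epigraph[OF assms(1,2)],
        of "(p, F)"]
    unfolding T_def by blast
  obtain a1 a0 where a: "a = (a1, a0)" by (cases a)
  have below': "a1 \<bullet> p + a0 * F \<le> b" using below a by (simp add: inner_Pair)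
  have above': "\<And>w r. f w < ereal r \<Longrightarrow> b \<le> a1 \<bullet> w + a0 * r"
    using above a by (auto simp: T_def inner_Pair)
  have "0 < a0"
  proof (rule ccontr)
    assume "\<not> 0 < a0"
    moreover have "b \<le> a1 \<bullet> p + a0 * (F + 1)" using above'[of p "F + 1"] F by simp
    ultimately have "a0 = 0" using below' by (simp add: algebra_simps)
    with \<open>a \<noteq> 0\<close> a have "a1 \<noteq> 0" by (simp add: zero_prod_def)
    \<comment> \<open>a vertical hyperplane would cut the ball around p inside the domain\<close>
    define w where "w = p - (e / 2 / norm a1) *\<^sub>R a1"
    have "w \<in> ball p e" using \<open>a1 \<noteq> 0\<close> e by (simp add: w_def dist_norm)
    then obtain fw where "f w = ereal fw" using e ninf[of w] by (cases "f w") auto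
    then have "b \<le> a1 \<bullet> w" using above'[of w "fw + 1"] \<open>a0 = 0\<close> by simp
    moreover have "a1 \<bullet> w = a1 \<bullet> p - e / 2 * norm a1"
      using \<open>a1 \<noteq> 0\<close> by (simp add: w_def inner_diff_right dot_square_norm power2_eq_square)
    moreover have "0 < e * norm a1" using \<open>a1 \<noteq> 0\<close> e by simp
    ultimately show False using below' \<open>a0 = 0\<close> by simp
  qed
  then show ?thesis
    using subgradient_of_nonvertical_support[OF \<open>proper_fun f\<close> F _ below' above'] by blast
qed

lemma fenchel_young: "ereal (y \<bullet> w) - g w \<le> fconj g y"
  unfolding fconj_def by (rule SUP_upper) simp

lemma fenchel_young_eq:
  assumes "proper_fun g" and v: "v \<in> subdiff g w" and G: "g w = ereal G"
  shows "fconj g v = ereal (v \<bullet> w - G)"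
proof (rule antisym)
  show "fconj g v \<le> ereal (v \<bullet> w - G)"
    unfolding fconj_def
  proof (rule SUP_least)
    fix x
    have "g w + ereal (v \<bullet> (x - w)) \<le> g x" using v by (auto simp: subdiff_def)
    then show "ereal (v \<bullet> x) - g x \<le> ereal (v \<bullet> w - G)"
      using G \<open>proper_fun g\<close> by (cases "g x") (auto simp: inner_diff_right proper_fun_def)
  qed
  show "ereal (v \<bullet> w - G) \<le> fconj g v" using fenchel_young[of v w g] G by simp
qed

lemma fconj_convex:
  assumes "proper_fun g" and c1: "fconj g y1 = ereal c1" and c2: "fconj g y2 = ereal c2"
    and "0 \<le> u" and "0 \<le> v" and "u + v = 1"
  shows "fconj g (u *\<^sub>R y1 + v *\<^sub>R y2) \<le> ereal (u * c1 + v * c2)"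
  unfolding fconj_def
proof (rule SUP_least)
  fix x
  show "ereal ((u *\<^sub>R y1 + v *\<^sub>R y2) \<bullet> x) - g x \<le> ereal (u * c1 + v * c2)"
  proof (cases "g x")
    case (real G)
    have "y1 \<bullet> x - G \<le> c1" "y2 \<bullet> x - G \<le> c2"
      using fenchel_young[of y1 x g] fenchel_young[of y2 x g] c1 c2 real by auto
    then have "u * (y1 \<bullet> x - G) + v * (y2 \<bullet> x - G) \<le> u * c1 + v * c2"
      using assms(4,5) by (intro add_mono mult_left_mono)
    moreover have "u * (y1 \<bullet> x - G) + v * (y2 \<bullet> x - G) = (u *\<^sub>R y1 + v *\<^sub>R y2) \<bullet> x - G"
    proof -
      have "G = u * G + v * G" using \<open>u + v = 1\<close> by (metis distrib_right mult_1)
      then show ?thesis by (simp add: inner_add_left algebra_simps)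
    qed
    ultimately show ?thesis using real by simp
  qed (use \<open>proper_fun g\<close> in \<open>auto simp: proper_fun_def\<close>)
qed

lemma fconj_plus_le_iff:
  assumes "proper_fun g"
  shows "fconj g y + ereal c \<le> ereal r \<longleftrightarrow>
         (\<forall>x. g x \<noteq> \<infinity> \<longrightarrow> y \<bullet> x - real_of_ereal (g x) + c \<le> r)"
proof -
  have "fconj g y + ereal c \<le> ereal r \<longleftrightarrow> fconj g y \<le> ereal (r - c)"
    by (cases "fconj g y") auto
  also have "\<dots> \<longleftrightarrow> (\<forall>x. ereal (y \<bullet> x) - g x \<le> ereal (r - c))"
    unfolding fconj_def by (simp add: SUP_le_iff)
  also have "\<dots> \<longleftrightarrow> (\<forall>x. g x \<noteq> \<infinity> \<longrightarrow> y \<bullet> x - real_of_ereal (g x) + c \<le> r)"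
    using \<open>proper_fun g\<close> by (intro all_cong1, case_tac "g x") (auto simp: proper_fun_def)
  finally show ?thesis .
qed

lemma closed_fconj_plus_sublevel:
  assumes "proper_fun g" and "continuous_on UNIV \<phi>"
  shows "closed {y. fconj g y + ereal (\<phi> y) \<le> ereal r}"
proof -
  have "{y. fconj g y + ereal (\<phi> y) \<le> ereal r}
      = (\<Inter>x\<in>{x. g x \<noteq> \<infinity>}. {y. y \<bullet> x - real_of_ereal (g x) + \<phi> y \<le> r})"
    using fconj_plus_le_iff[OF \<open>proper_fun g\<close>] by auto
  moreover have "closed {y. y \<bullet> x - real_of_ereal (g x) + \<phi> y \<le> r}" for x
    using assms(2) by (intro closed_Collect_le continuous_intros) auto
  ultimately show ?thesis by auto
qed

section \<open>The proximal map of the conjugate\<close>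

lemma ereal_closed_sublevels_attains_min:
  fixes \<Phi> :: "'a::heine_borel \<Rightarrow> ereal"
  assumes closed: "\<And>r. closed {y. \<Phi> y \<le> ereal r}"
    and bounded: "bounded {y. \<Phi> y \<le> ereal M}" and y0: "\<Phi> y0 \<le> ereal M"
  obtains z where "\<And>w. \<Phi> z \<le> \<Phi> w"
proof -
  define T where "T r = {y. \<Phi> y \<le> ereal r}" for r
  define m where "m = (INF y\<in>T M. \<Phi> y)"
  have compact: "compact (T M)" using closed bounded by (simp add: T_def compact_eq_bounded_closed)
  have fip: "T M \<inter> (\<Inter>r\<in>I. T r) \<noteq> {}" if "finite I" "I \<subseteq> {r. m < ereal r}" for I
  proof (cases "I = {}")
    case True then show ?thesis using y0 by (auto simp: T_def)
  next
    case False
    then have "Min I \<in> I" using \<open>finite I\<close> by simp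
    then have "m < ereal (Min I)" using that(2) by auto
    then obtain y where "y \<in> T M" "\<Phi> y < ereal (Min I)" unfolding m_def by (auto simp: INF_less_iff)
    moreover have "\<Phi> y \<le> ereal r" if "r \<in> I" for r
    proof -
      have "ereal (Min I) \<le> ereal r" using \<open>finite I\<close> that by simp
      with less_imp_le[OF \<open>\<Phi> y < ereal (Min I)\<close>] show ?thesis by (rule order.trans)
    qed
    ultimately show ?thesis by (auto simp: T_def)
  qed
  have "closed (T r)" for r using closed by (simp add: T_def)
  then have "T M \<inter> (\<Inter>r\<in>{r. m < ereal r}. T r) \<noteq> {}"
    using compact_imp_fip_image[OF compact, of "{r. m < ereal r}" T] fip by blast
  then obtain z where z: "z \<in> T M" "\<And>r. m < ereal r \<Longrightarrow> z \<in> T r" by blast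
  show ?thesis
  proof (rule that)
    fix w
    show "\<Phi> z \<le> \<Phi> w"
    proof (cases "w \<in> T M")
      case True
      have "\<Phi> z \<le> m"
      proof (rule ccontr)
        assume "\<not> \<Phi> z \<le> m"
        then obtain r where "m < ereal r" "ereal r < \<Phi> z" using ereal_dense2 by (meson not_le)
        then show False using z(2)[of r] by (auto simp: T_def)
      qed
      also have "m \<le> \<Phi> w" unfolding m_def using True by (rule INF_lower)
      finally show ?thesis .
    next
      case False
      then show ?thesis using z(1) by (auto simp: T_def)
    qed
  qed
qed

lemma le_of_square_le_affine:
  fixes t a b :: real
  assumes "t\<^sup>2 \<le> a * t + b" and "0 \<le> a" and "0 \<le> b" and "0 \<le> t"
  shows "t \<le> a + b + 1"
proof (rule ccontr)
  assume "\<not> t \<le> a + b + 1"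
  then have "(a + b + 1) * t < t * t" and "b + 1 \<le> (b + 1) * t"
    using assms by (auto intro: mult_strict_right_mono simp: mult_le_cancel_left1)
  then show False using assms(1) by (simp add: power2_eq_square algebra_simps)
qed

lemma bounded_fconj_prox_sublevel:
  assumes G0: "g w0 = ereal G0" and "0 < \<kappa>"
  shows "bounded {y. fconj g y + ereal (norm (y - c) ^ 2 / (2 * \<kappa>)) \<le> ereal M}"
proof -
  define a where "a = 2 * \<kappa> * norm w0"
  define b where "b = \<bar>2 * \<kappa> * (M + G0 + norm c * norm w0)\<bar>"
  have "norm (y - c) \<le> a + b + 1"
    if y: "fconj g y + ereal (norm (y - c) ^ 2 / (2 * \<kappa>)) \<le> ereal M" for y
  proof -
    define t where "t = norm (y - c)"
    have "ereal (y \<bullet> w0 - G0) \<le> fconj g y" using fenchel_young[of y w0 g] G0 by simp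
    then have "y \<bullet> w0 - G0 + t\<^sup>2 / (2 * \<kappa>) \<le> M"
      using y unfolding t_def by (cases "fconj g y") auto
    moreover have "- (y \<bullet> w0) \<le> (t + norm c) * norm w0"
    proof -
      have "- (y \<bullet> w0) \<le> norm y * norm w0" using Cauchy_Schwarz_ineq2[of y w0] by (simp add: abs_le_iff)
      also have "\<dots> \<le> (t + norm c) * norm w0"
        using norm_triangle_ineq[of "y - c" c] by (simp add: t_def mult_right_mono)
      finally show ?thesis .
    qed
    ultimately have "t\<^sup>2 / (2 * \<kappa>) \<le> M + G0 + (t + norm c) * norm w0" by simp
    then have "t\<^sup>2 \<le> a * t + 2 * \<kappa> * (M + G0 + norm c * norm w0)"
      using \<open>0 < \<kappa>\<close> by (simp add: a_def field_simps)
    also have "\<dots> \<le> a * t + b" by (simp add: b_def)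
    finally show ?thesis
      using \<open>0 < \<kappa>\<close> le_of_square_le_affine by (simp add: a_def b_def t_def)
  qed
  then show ?thesis
    by (intro boundedI[where B = "norm c + (a + b + 1)"]) (smt (verit) mem_Collect_eq norm_triangle_sub)
qed

lemma norm_midpoint_sub_square:
  fixes z1 z2 c :: "'a::real_inner"
  shows "norm ((1/2) *\<^sub>R z1 + (1/2) *\<^sub>R z2 - c) ^ 2 =
         (norm (z1 - c) ^ 2 + norm (z2 - c) ^ 2) / 2 - norm (z1 - z2) ^ 2 / 4"
proof -
  have "(1/2) *\<^sub>R z1 + (1/2) *\<^sub>R z2 - c = (1/2) *\<^sub>R ((z1 - c) + (z2 - c))"
    and "z1 - z2 = (z1 - c) - (z2 - c)"
    by (simp_all add: algebra_simps flip: scaleR_add_right)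
  then show ?thesis
    by (simp add: power2_norm_eq_inner inner_add_left inner_add_right inner_diff_left
        inner_diff_right inner_commute field_simps)
qed

lemma fconj_prox_minimiser_unique:
  assumes "proper_fun g" and "0 < \<kappa>"
    and fin: "fconj g z1 = ereal a1" "fconj g z2 = ereal a2"
    and min1: "\<forall>w. fconj g z1 + ereal (norm (z1 - c) ^ 2 / (2 * \<kappa>))
                   \<le> fconj g w + ereal (norm (w - c) ^ 2 / (2 * \<kappa>))"
    and min2: "\<forall>w. fconj g z2 + ereal (norm (z2 - c) ^ 2 / (2 * \<kappa>))
                   \<le> fconj g w + ereal (norm (w - c) ^ 2 / (2 * \<kappa>))"
  shows "z1 = z2"
proof -
  define Q where "Q y = norm (y - c) ^ 2 / (2 * \<kappa>)" for y
  define mid where "mid = (1/2) *\<^sub>R z1 + (1/2) *\<^sub>R z2"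
  define D where "D = norm (z1 - z2) ^ 2 / (8 * \<kappa>)"
  have "fconj g mid \<le> ereal ((1/2) * a1 + (1/2) * a2)"
    unfolding mid_def by (rule fconj_convex[OF \<open>proper_fun g\<close> fin]) auto
  then have "a1 + Q z1 \<le> (a1 + a2) / 2 + Q mid"
    using min1[rule_format, of mid] fin(1) unfolding Q_def[symmetric]
    by (cases "fconj g mid") (auto simp: add_divide_distrib)
  moreover have "a1 + Q z1 = a2 + Q z2"
    using min1[rule_format, of z2] min2[rule_format, of z1] fin unfolding Q_def[symmetric] by simp
  moreover have "Q mid = (Q z1 + Q z2) / 2 - D"
    unfolding Q_def D_def mid_def norm_midpoint_sub_square using \<open>0 < \<kappa>\<close> by (simp add: field_simps)
  ultimately have "D \<le> 0" by argo
  then show ?thesis using \<open>0 < \<kappa>\<close> by (simp add: D_def divide_le_0_iff)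
qed

lemma prox_fconj_ex1:
  fixes g :: "'a::euclidean_space \<Rightarrow> ereal"
  assumes "proper_fun g" and v0: "v0 \<in> subdiff g w0" and "0 < \<kappa>"
  shows "\<exists>!y. \<forall>w. fconj g y + ereal (norm (y - c) ^ 2 / (2 * \<kappa>))
                     \<le> fconj g w + ereal (norm (w - c) ^ 2 / (2 * \<kappa>))"
proof -
  define \<Phi> where "\<Phi> y = fconj g y + ereal (norm (y - c) ^ 2 / (2 * \<kappa>))" for y
  obtain G0 where G0: "g w0 = ereal G0"
    using v0 \<open>proper_fun g\<close> by (cases "g w0") (auto simp: subdiff_def proper_fun_def)
  define M where "M = v0 \<bullet> w0 - G0 + norm (v0 - c) ^ 2 / (2 * \<kappa>)"
  have "\<Phi> v0 = ereal M"
    using fenchel_young_eq[OF \<open>proper_fun g\<close> v0 G0] by (simp add: \<Phi>_def M_def)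
  have closed: "closed {y. \<Phi> y \<le> ereal r}" for r
    unfolding \<Phi>_def using \<open>0 < \<kappa>\<close>
    by (intro closed_fconj_plus_sublevel \<open>proper_fun g\<close> continuous_intros) auto
  have bounded: "bounded {y. \<Phi> y \<le> ereal M}"
    unfolding \<Phi>_def by (rule bounded_fconj_prox_sublevel[of g w0 G0 \<kappa>, OF G0 \<open>0 < \<kappa>\<close>])
  from \<open>\<Phi> v0 = ereal M\<close> have "\<Phi> v0 \<le> ereal M" by simp
  then obtain z where z: "\<And>w. \<Phi> z \<le> \<Phi> w"
    by (rule ereal_closed_sublevels_attains_min[OF closed bounded]) blast
  have "\<exists>a. fconj g y = ereal a" if "\<forall>w. \<Phi> y \<le> \<Phi> w" for y
  proof -
    have "fconj g y \<noteq> \<infinity>" using that \<open>\<Phi> v0 = ereal M\<close> by (auto simp: \<Phi>_def dest: spec[of _ v0])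
    moreover have "fconj g y \<noteq> -\<infinity>" using fenchel_young[of y w0 g] G0 by auto
    ultimately show ?thesis by (cases "fconj g y") auto
  qed
  then show ?thesis
    using z fconj_prox_minimiser_unique[OF \<open>proper_fun g\<close> \<open>0 < \<kappa>\<close>] unfolding \<Phi>_def by metis
qed

lemma prox_fconj_le:
  fixes g :: "'a::euclidean_space \<Rightarrow> ereal"
  assumes "proper_fun g" and "v0 \<in> subdiff g w0" and "0 < \<kappa>"
  shows "fconj g (prox (fconj g) \<kappa> c) + ereal (norm (prox (fconj g) \<kappa> c - c) ^ 2 / (2 * \<kappa>))
           \<le> fconj g y + ereal (norm (y - c) ^ 2 / (2 * \<kappa>))"
  using theI'[OF prox_fconj_ex1[OF assms, of c]] unfolding prox_def by blast

lemma prox_objective_expand: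
  fixes y w :: "'a::real_inner"
  assumes "0 < \<gamma>"
  shows "norm (y - (1/\<gamma>) *\<^sub>R w) ^ 2 / (2 * (1/\<gamma>)) = \<gamma>/2 * (norm y) ^ 2 - y \<bullet> w + (norm w) ^ 2 / (2 * \<gamma>)"
  using assms
  by (simp add: power2_norm_eq_inner inner_diff_left inner_diff_right inner_commute field_simps)

lemma prox_fconj_dual_bound:
  fixes g :: "'a::euclidean_space \<Rightarrow> ereal"
  assumes "proper_fun g" and v: "v \<in> subdiff g w" and G: "g w = ereal G" and "0 < \<gamma>"
    and z: "z = prox (fconj g) (1/\<gamma>) ((1/\<gamma>) *\<^sub>R w)"
  obtains c where "fconj g z = ereal c" and "norm z \<le> norm v"
    and "G - \<gamma>/2 * (norm v)\<^sup>2 \<le> z \<bullet> w - c - \<gamma>/2 * (norm z)\<^sup>2"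
proof -
  have le: "fconj g z + ereal (\<gamma>/2 * (norm z)\<^sup>2 - z \<bullet> w + (norm w)\<^sup>2 / (2 * \<gamma>))
       \<le> fconj g v + ereal (\<gamma>/2 * (norm v)\<^sup>2 - v \<bullet> w + (norm w)\<^sup>2 / (2 * \<gamma>))"
    using prox_fconj_le[OF \<open>proper_fun g\<close> v, of "1/\<gamma>" "(1/\<gamma>) *\<^sub>R w" v] \<open>0 < \<gamma>\<close>
    unfolding z prox_objective_expand[OF \<open>0 < \<gamma>\<close>] by simp
  have fv: "fconj g v = ereal (v \<bullet> w - G)" by (rule fenchel_young_eq[OF \<open>proper_fun g\<close> v G])
  have fz: "ereal (z \<bullet> w - G) \<le> fconj g z" using fenchel_young[of z w g] G by simp
  then obtain c where c: "fconj g z = ereal c" using le fv by (cases "fconj g z") auto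
  have dual: "G - \<gamma>/2 * (norm v)\<^sup>2 \<le> z \<bullet> w - c - \<gamma>/2 * (norm z)\<^sup>2"
    using le fv c by simp
  moreover have "z \<bullet> w - c \<le> G" using fz c by simp
  ultimately have "\<gamma>/2 * (norm z)\<^sup>2 \<le> \<gamma>/2 * (norm v)\<^sup>2" by linarith
  then have "(norm z)\<^sup>2 \<le> (norm v)\<^sup>2" using \<open>0 < \<gamma>\<close> by simp
  then have "norm z \<le> norm v" by (rule power2_le_imp_le) simp
  with c dual show ?thesis using that by blast
qed

section \<open>Adaptive FSPS\<close>

lemma shrinking_sequence_eventually_const:
  fixes \<gamma> :: "nat \<Rightarrow> real"
  assumes "0 < q" and "q < 1" and "0 < c" and pos: "\<And>k. 0 < \<gamma> k"
    and shrink: "\<And>k. \<gamma> (Suc k) = \<gamma> k \<or> \<gamma> (Suc k) \<le> q * \<gamma> k"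
    and keep: "\<And>k. \<gamma> k \<le> c \<Longrightarrow> \<gamma> (Suc k) = \<gamma> k"
  shows "\<exists>K. \<forall>k\<ge>K. \<gamma> k = \<gamma> K"
proof -
  have dec: "\<gamma> (Suc k) \<le> \<gamma> k" for k
  proof -
    have "q * \<gamma> k \<le> \<gamma> k" using pos[of k] \<open>0 < q\<close> \<open>q < 1\<close> by (intro mult_left_le_one_le) auto
    then show ?thesis using shrink[of k] by linarith
  qed
  then have "decseq \<gamma>" by (rule decseq_SucI)
  then have antimono: "\<gamma> l \<le> \<gamma> k" if "k \<le> l" for k l
    using that by (rule decseqD)
  have "\<exists>K. \<forall>k\<ge>K. \<gamma> (Suc k) = \<gamma> k"
  proof (cases "\<exists>K. \<gamma> K \<le> c")
    case True
    then obtain K where "\<gamma> K \<le> c" by blast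
    then show ?thesis using keep antimono by (meson order.trans)
  next
    case False
    define L where "L = (INF k. \<gamma> k)"
    have bdd: "bdd_below (range \<gamma>)" using pos by (meson bdd_belowI2 less_imp_le)
    have "c \<le> L" unfolding L_def using False by (intro cINF_greatest) (auto simp: not_le less_imp_le)
    then have "L < L / q" using \<open>0 < c\<close> \<open>0 < q\<close> \<open>q < 1\<close> by (simp add: less_divide_eq)
    then obtain K where "\<gamma> K < L / q"
      using cINF_less_iff[OF _ bdd] unfolding L_def by auto
    \<comment> \<open>past \<open>K\<close> a further shrink by \<open>q\<close> would undercut the infimum\<close>
    have "\<gamma> (Suc k) = \<gamma> k" if "K \<le> k" for k
    proof -
      have "q * \<gamma> k \<le> q * \<gamma> K" using antimono[OF that] \<open>0 < q\<close> by simp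
      also have "\<dots> < L" using \<open>\<gamma> K < L / q\<close> \<open>0 < q\<close> by (simp add: less_divide_eq mult.commute)
      finally have "q * \<gamma> k < L" .
      moreover have "L \<le> \<gamma> (Suc k)" unfolding L_def by (rule cINF_lower[OF bdd]) simp
      ultimately show ?thesis using shrink[of k] by linarith
    qed
    then show ?thesis by blast
  qed
  then obtain K where K: "\<And>k. K \<le> k \<Longrightarrow> \<gamma> (Suc k) = \<gamma> k" by blast
  have "\<gamma> k = \<gamma> K" if "K \<le> k" for k
    using that by (induction k rule: dec_induct) (auto simp: K)
  then show ?thesis by blast
qed

text \<open>Only what the step-size rule uses: \<open>a\<close> is a positive lower bound of \<open>g \<circ> A + h\<close>
  on \<open>S\<close> (it replaces \<open>\<alpha>\<close>) and \<open>b\<close> (later \<open>ell + 1\<close>) bounds some subgradient of \<open>g\<close>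
  at every \<open>A x\<close>.\<close>
locale fsps_setting =
  fixes S :: "'n::euclidean_space set" and A :: "'n \<Rightarrow> 's::euclidean_space"
    and K :: "'n \<Rightarrow> 'p::euclidean_space" and g :: "'s \<Rightarrow> ereal" and f :: "'p \<Rightarrow> ereal"
    and h :: "'n \<Rightarrow> real" and gradh :: "'n \<Rightarrow> 'n" and Lh \<beta> \<nu> q \<epsilon> a b :: real
  assumes S_closed: "closed S" and S_nonempty: "S \<noteq> {}"
    and g_proper: "proper_fun g"
    and f_proper: "proper_fun f" and f_convex: "convex_fun f"
    and K_S_interior: "K ` S \<subseteq> interior {w. f w < \<infinity>}" and f_K_pos: "\<And>x. x \<in> S \<Longrightarrow> 0 < f (K x)"
    and a_pos: "0 < a" and a_lower: "\<And>x. x \<in> S \<Longrightarrow> ereal a \<le> g (A x) + ereal (h x)"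
    and b_pos: "0 < b" and subgrad_bounded: "\<And>x. x \<in> S \<Longrightarrow> \<exists>v\<in>subdiff g (A x). norm v \<le> b"
    and q_pos: "0 < q" and q_less_1: "q < 1" and \<epsilon>_pos: "0 < \<epsilon>"
    and \<nu>_nonneg: "0 \<le> \<nu>" and Lh_nonneg: "0 \<le> Lh"
begin

abbreviation step where "step \<equiv> fsps_step S A K g h gradh Lh f \<beta> \<nu> q \<epsilon>"

abbreviation dual_prox :: "real \<Rightarrow> 'n \<Rightarrow> 's" where
  "dual_prox \<gamma> x \<equiv> prox (fconj g) (1 / \<gamma>) ((1 / \<gamma>) *\<^sub>R A x)"

abbreviation theta :: "'n \<Rightarrow> 'n \<Rightarrow> real \<Rightarrow> real \<Rightarrow> ereal" where
  "theta x u \<delta> \<gamma> \<equiv> fsps_Psi S A g h x (dual_prox \<gamma> x) u \<delta> \<gamma> / f (K x)"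

text \<open>Below this value the trial \<open>j = 0\<close> is accepted (\<open>\<gamma> b\<^sup>2 \<le> a\<close>) and the safeguard
  on \<open>\<parallel>z\<parallel>\<close> never fires (\<open>\<gamma> b \<le> \<epsilon>\<close>, \<open>\<gamma> b\<^sup>2 \<le> \<epsilon>\<close>).\<close>
definition \<gamma>_safe :: real where
  "\<gamma>_safe = min (a / b\<^sup>2) (min (\<epsilon> / b) (\<epsilon> / b\<^sup>2))"

lemma \<gamma>_safe_pos: "0 < \<gamma>_safe"
  using a_pos b_pos \<epsilon>_pos by (simp add: \<gamma>_safe_def)

lemma f_K_finite:
  assumes "x \<in> S"
  obtains F where "f (K x) = ereal F" and "0 < F"
proof -
  have "f (K x) < \<infinity>" using K_S_interior assms interior_subset by blast
  with f_K_pos[OF assms] show ?thesis using that by (cases "f (K x)") auto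
qed

lemma norm_dual_prox_le:
  assumes "x \<in> S" and "0 < \<gamma>"
  shows "norm (dual_prox \<gamma> x) \<le> b"
proof -
  obtain v where v: "v \<in> subdiff g (A x)" "norm v \<le> b" using subgrad_bounded[OF assms(1)] by blast
  then obtain G where "g (A x) = ereal G"
    using g_proper by (cases "g (A x)") (auto simp: subdiff_def proper_fun_def)
  from prox_fconj_dual_bound[OF g_proper v(1) this assms(2) refl] v(2) show ?thesis by force
qed

lemma theta_pos:
  assumes "x \<in> S" and "0 < \<gamma>" and "\<gamma> \<le> \<gamma>_safe" and "0 \<le> \<delta>"
  shows "0 < theta x u \<delta> \<gamma>"
proof -
  obtain v where v: "v \<in> subdiff g (A x)" "norm v \<le> b" using subgrad_bounded[OF assms(1)] by blast
  then obtain G where G: "g (A x) = ereal G"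
    using g_proper by (cases "g (A x)") (auto simp: subdiff_def proper_fun_def)
  define z where "z = dual_prox \<gamma> x"
  obtain c where c: "fconj g z = ereal c"
    and dual: "G - \<gamma>/2 * (norm v)\<^sup>2 \<le> z \<bullet> A x - c - \<gamma>/2 * (norm z)\<^sup>2"
    using prox_fconj_dual_bound[OF g_proper v(1) G \<open>0 < \<gamma>\<close> z_def] by blast
  have "\<gamma> * (norm v)\<^sup>2 \<le> \<gamma> * b\<^sup>2" using v(2) \<open>0 < \<gamma>\<close> by (simp add: power_mono)
  also have "\<dots> \<le> a" using \<open>\<gamma> \<le> \<gamma>_safe\<close> b_pos by (simp add: \<gamma>_safe_def le_divide_eq)
  finally have "\<gamma>/2 * (norm v)\<^sup>2 < a" using a_pos by simp
  moreover have "a \<le> G + h x" using a_lower[OF assms(1)] G by simp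
  moreover have "0 \<le> \<delta> / 2 * (norm (x - u))\<^sup>2" using \<open>0 \<le> \<delta>\<close> by simp
  ultimately have "0 < z \<bullet> A x - c + (h x + \<delta> / 2 * (norm (x - u))\<^sup>2 - \<gamma> / 2 * (norm z)\<^sup>2)"
    using dual by linarith
  moreover obtain F where "f (K x) = ereal F" "0 < F" using f_K_finite[OF assms(1)] .
  ultimately show ?thesis using assms(1) c by (simp add: fsps_Psi_def z_def)
qed

lemma norm_dual_prox_le_safeguard:
  assumes "x \<in> S" and "0 < \<gamma>" and "\<gamma> \<le> \<gamma>_safe"
  shows "norm (dual_prox \<gamma> x) \<le> min (\<epsilon> / \<gamma>) (sqrt (2 * \<epsilon> / \<gamma>))"
proof -
  have "\<gamma> * b \<le> \<epsilon>" and "\<gamma> * b\<^sup>2 \<le> \<epsilon>"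
    using \<open>\<gamma> \<le> \<gamma>_safe\<close> b_pos by (simp_all add: \<gamma>_safe_def le_divide_eq)
  then have "b \<le> \<epsilon> / \<gamma>" and "b\<^sup>2 \<le> 2 * \<epsilon> / \<gamma>"
    using \<open>0 < \<gamma>\<close> \<epsilon>_pos by (simp_all add: le_divide_eq mult.commute)
  then have "b \<le> min (\<epsilon> / \<gamma>) (sqrt (2 * \<epsilon> / \<gamma>))" by (simp add: real_le_rsqrt)
  with norm_dual_prox_le[OF assms(1,2)] show ?thesis by linarith
qed

lemma fsps_stepE:
  assumes "step x z u \<gamma> \<delta> \<theta> x' z' u' \<gamma>' \<delta>' \<theta>'"
  obtains j where "x' \<in> S"
    and "\<And>i. i < j \<Longrightarrow> \<not> 0 < theta x' u' \<delta> (\<gamma> * q ^ i)"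
    and "z' = dual_prox (\<gamma> * q ^ j) x'"
    and "\<gamma>' = (if min (\<epsilon> / (\<gamma> * q ^ j)) (sqrt (2 * \<epsilon> / (\<gamma> * q ^ j))) < norm z'
               then \<gamma> * q ^ j * q else \<gamma> * q ^ j)"
    and "\<delta>' = 2 * \<nu> + Lh + 2 * (onorm A)\<^sup>2 / \<gamma>'"
proof -
  define j where "j = (LEAST j. 0 < theta x' u' \<delta> (\<gamma> * q ^ j))"
  from assms obtain y where x': "x' = closest_point S (u + (\<theta> / \<delta>) *\<^sub>R adjoint K y
      - (1 / \<delta>) *\<^sub>R gradh x - (1 / \<delta>) *\<^sub>R adjoint A z)"
    and rest: "z' = dual_prox (\<gamma> * q ^ j) x'"
      "\<gamma>' = (if min (\<epsilon> / (\<gamma> * q ^ j)) (sqrt (2 * \<epsilon> / (\<gamma> * q ^ j))) < norm z'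
               then \<gamma> * q ^ j * q else \<gamma> * q ^ j)"
      "\<delta>' = 2 * \<nu> + Lh + 2 * (onorm A)\<^sup>2 / \<gamma>'"
    unfolding fsps_step_def Let_def j_def by blast
  have "x' \<in> S" unfolding x' using S_closed S_nonempty by (rule closest_point_in_set)
  moreover have "\<not> 0 < theta x' u' \<delta> (\<gamma> * q ^ i)" if "i < j" for i
    using not_less_Least[OF that[unfolded j_def]] .
  ultimately show ?thesis using that rest by blast
qed

lemma fsps_step_exists:
  assumes "x \<in> S" and "0 < \<gamma>" and "0 \<le> \<delta>"
  shows "\<exists>x' z' u' \<gamma>' \<delta>' \<theta>'. step x z u \<gamma> \<delta> \<theta> x' z' u' \<gamma>' \<delta>' \<theta>'"
proof -
  obtain y where y: "y \<in> subdiff f (K x)"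
    using subdiff_nonempty_interior_dom[OF f_proper f_convex] K_S_interior assms(1) by blast
  define x' where "x' = closest_point S (u + (\<theta> / \<delta>) *\<^sub>R adjoint K y
      - (1 / \<delta>) *\<^sub>R gradh x - (1 / \<delta>) *\<^sub>R adjoint A z)"
  define u' where "u' = (1 - \<beta>) *\<^sub>R u + \<beta> *\<^sub>R x'"
  have "x' \<in> S" unfolding x'_def using S_closed S_nonempty by (rule closest_point_in_set)
  \<comment> \<open>the backtracking reaches \<open>\<gamma>_safe\<close> after finitely many trials\<close>
  obtain n where "q ^ n < \<gamma>_safe / \<gamma>"
    using real_arch_pow_inv[of "\<gamma>_safe / \<gamma>" q] \<gamma>_safe_pos \<open>0 < \<gamma>\<close> q_less_1 by auto
  then have "\<gamma> * q ^ n \<le> \<gamma>_safe" using \<open>0 < \<gamma>\<close> by (simp add: less_divide_eq mult.commute)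
  then have "0 < theta x' u' \<delta> (\<gamma> * q ^ n)"
    using theta_pos[OF \<open>x' \<in> S\<close> _ _ \<open>0 \<le> \<delta>\<close>] \<open>0 < \<gamma>\<close> q_pos by simp
  then have "0 < theta x' u' \<delta> (\<gamma> * q ^ (LEAST j. 0 < theta x' u' \<delta> (\<gamma> * q ^ j)))"
    by (rule LeastI)
  then show ?thesis
    unfolding fsps_step_def Let_def using y by (auto simp: x'_def u'_def)
qed

lemma fsps_step_mem:
  assumes "step x z u \<gamma> \<delta> \<theta> x' z' u' \<gamma>' \<delta>' \<theta>'"
  shows "x' \<in> S"
  using assms by (rule fsps_stepE)

lemma fsps_step_delta:
  assumes "step x z u \<gamma> \<delta> \<theta> x' z' u' \<gamma>' \<delta>' \<theta>'"
  shows "\<delta>' = 2 * \<nu> + Lh + 2 * (onorm A)\<^sup>2 / \<gamma>'"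
  using assms by (rule fsps_stepE)

lemma fsps_step_norm_le:
  assumes "step x z u \<gamma> \<delta> \<theta> x' z' u' \<gamma>' \<delta>' \<theta>'" and "0 < \<gamma>"
  shows "norm z' \<le> b"
  using assms(1)
proof (rule fsps_stepE)
  fix j assume "x' \<in> S" and "z' = dual_prox (\<gamma> * q ^ j) x'"
  then show ?thesis using norm_dual_prox_le \<open>0 < \<gamma>\<close> q_pos by simp
qed

lemma fsps_step_gamma:
  assumes "step x z u \<gamma> \<delta> \<theta> x' z' u' \<gamma>' \<delta>' \<theta>'" and "0 < \<gamma>"
  shows "0 < \<gamma>'" and "\<gamma>' = \<gamma> \<or> \<gamma>' \<le> q * \<gamma>"
proof -
  obtain j where \<gamma>': "\<gamma>' = \<gamma> * q ^ j * q \<or> \<gamma>' = \<gamma> * q ^ j"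
    using fsps_stepE[OF assms(1)] by metis
  then show "0 < \<gamma>'" using \<open>0 < \<gamma>\<close> q_pos by auto
  have "\<gamma> * q ^ j * q \<le> \<gamma> * q ^ j" using \<open>0 < \<gamma>\<close> q_pos q_less_1 by simp
  moreover have "\<gamma> * q ^ j \<le> q * \<gamma>" if "0 < j"
    using power_decreasing[of 1 j q] that \<open>0 < \<gamma>\<close> q_pos q_less_1 by (simp add: mult.commute)
  ultimately show "\<gamma>' = \<gamma> \<or> \<gamma>' \<le> q * \<gamma>"
    using \<gamma>' by (cases "j = 0") (auto simp: mult.commute)
qed

lemma fsps_step_keeps_safe_gamma:
  assumes "step x z u \<gamma> \<delta> \<theta> x' z' u' \<gamma>' \<delta>' \<theta>'"
    and "0 < \<gamma>" and "\<gamma> \<le> \<gamma>_safe" and "0 \<le> \<delta>"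
  shows "\<gamma>' = \<gamma>"
  using assms(1)
proof (rule fsps_stepE)
  fix j assume "x' \<in> S" and not_before: "\<And>i. i < j \<Longrightarrow> \<not> 0 < theta x' u' \<delta> (\<gamma> * q ^ i)"
    and z': "z' = dual_prox (\<gamma> * q ^ j) x'"
    and \<gamma>': "\<gamma>' = (if min (\<epsilon> / (\<gamma> * q ^ j)) (sqrt (2 * \<epsilon> / (\<gamma> * q ^ j))) < norm z'
               then \<gamma> * q ^ j * q else \<gamma> * q ^ j)"
  have "j = 0"
    using not_before[of 0] theta_pos[OF \<open>x' \<in> S\<close> assms(2-4)] by (cases j) auto
  then show ?thesis
    using \<gamma>' z' norm_dual_prox_le_safeguard[OF \<open>x' \<in> S\<close> assms(2,3)] by auto
qed

lemma fsps_step_norm_le_safeguard: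
  assumes "step x z u \<gamma> \<delta> \<theta> x' z' u' \<gamma>' \<delta>' \<theta>'" and "0 < \<gamma>" and "\<gamma>' = \<gamma>"
  shows "norm z' \<le> min (\<epsilon> / \<gamma>) (sqrt (2 * \<epsilon> / \<gamma>))"
  using assms(1)
proof (rule fsps_stepE)
  fix j assume \<gamma>': "\<gamma>' = (if min (\<epsilon> / (\<gamma> * q ^ j)) (sqrt (2 * \<epsilon> / (\<gamma> * q ^ j))) < norm z'
               then \<gamma> * q ^ j * q else \<gamma> * q ^ j)"
  have shrinks: "\<gamma> * q ^ n < \<gamma>" if "0 < n" for n
    using that \<open>0 < \<gamma>\<close> q_pos q_less_1 by (simp add: power_less_one_iff)
  have "\<not> min (\<epsilon> / (\<gamma> * q ^ j)) (sqrt (2 * \<epsilon> / (\<gamma> * q ^ j))) < norm z'"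
  proof
    assume "min (\<epsilon> / (\<gamma> * q ^ j)) (sqrt (2 * \<epsilon> / (\<gamma> * q ^ j))) < norm z'"
    then have "\<gamma> = \<gamma> * q ^ Suc j" using \<gamma>' \<open>\<gamma>' = \<gamma>\<close> by (simp add: power_Suc2 mult.commute)
    then show False using shrinks[of "Suc j"] by linarith
  qed
  moreover have "j = 0"
    using \<gamma>' \<open>\<gamma>' = \<gamma>\<close> shrinks[of j] calculation by (cases "j = 0") auto
  ultimately show ?thesis by (simp add: not_less)
qed

abbreviation step_at where
  "step_at x z u \<gamma> \<delta> \<theta> i \<equiv> step (x i) (z i) (u i) (\<gamma> i) (\<delta> i) (\<theta> i)
     (x (Suc i)) (z (Suc i)) (u (Suc i)) (\<gamma> (Suc i)) (\<delta> (Suc i)) (\<theta> (Suc i))"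

lemma iterates_invariant:
  assumes steps: "\<forall>i<k. step_at x z u \<gamma> \<delta> \<theta> i"
    and "x 0 \<in> S" and "0 < \<gamma> 0" and "0 \<le> \<delta> 0"
  shows "x k \<in> S \<and> 0 < \<gamma> k \<and> 0 \<le> \<delta> k"
  using steps
proof (induction k)
  case 0
  then show ?case using assms(2-4) by simp
next
  case (Suc k)
  then have st: "step_at x z u \<gamma> \<delta> \<theta> k" and "0 < \<gamma> k" by auto
  have "0 < \<gamma> (Suc k)" using fsps_step_gamma(1)[OF st \<open>0 < \<gamma> k\<close>] .
  moreover have "0 \<le> \<delta> (Suc k)"
    using fsps_step_delta[OF st] calculation \<nu>_nonneg Lh_nonneg by simp
  ultimately show ?case using fsps_step_mem[OF st] by simp
qed

lemma iterates_eventually_stable: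
  assumes all_steps: "\<forall>i. step_at x z u \<gamma> \<delta> \<theta> i"
    and "x 0 \<in> S" and "0 < \<gamma> 0" and "0 \<le> \<delta> 0"
  shows "(\<forall>k. norm (z (Suc k)) \<le> b) \<and> (\<forall>k. \<gamma> (Suc k) \<le> \<gamma> k)
    \<and> (\<exists>\<gamma>c>0. \<exists>K0. \<forall>k\<ge>K0. \<gamma> k = \<gamma>c \<and> \<delta> k = 2 * \<nu> + Lh + 2 * (onorm A)\<^sup>2 / \<gamma>c
           \<and> norm (z (Suc k)) \<le> min (\<epsilon> / \<gamma>c) (sqrt (2 * \<epsilon> / \<gamma>c)))"
proof -
  note steps = all_steps[rule_format]
  have steps_upto: "\<forall>i<k. step_at x z u \<gamma> \<delta> \<theta> i" for k using all_steps by blast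
  have inv: "x k \<in> S" "0 < \<gamma> k" "0 \<le> \<delta> k" for k
    using iterates_invariant[OF steps_upto assms(2-4)] by simp_all
  have bounded: "\<forall>k. norm (z (Suc k)) \<le> b" using fsps_step_norm_le[OF steps inv(2)] by blast
  have shrink: "\<gamma> (Suc k) = \<gamma> k \<or> \<gamma> (Suc k) \<le> q * \<gamma> k" for k
    using fsps_step_gamma(2)[OF steps inv(2)] .
  have decreasing: "\<gamma> (Suc k) \<le> \<gamma> k" for k
  proof -
    have "q * \<gamma> k \<le> \<gamma> k" using inv(2)[of k] q_pos q_less_1 by (intro mult_left_le_one_le) auto
    then show ?thesis using shrink[of k] by linarith
  qed
  have keep: "\<gamma> (Suc k) = \<gamma> k" if "\<gamma> k \<le> \<gamma>_safe" for k
    using fsps_step_keeps_safe_gamma[OF steps inv(2) that inv(3)] .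
  have "\<exists>N. \<forall>k\<ge>N. \<gamma> k = \<gamma> N"
    by (rule shrinking_sequence_eventually_const[where \<gamma> = \<gamma> and q = q and c = \<gamma>_safe])
      (fact q_pos q_less_1 \<gamma>_safe_pos inv(2) shrink keep)+
  then obtain N where N: "\<forall>k\<ge>N. \<gamma> k = \<gamma> N" ..
  have "\<gamma> k = \<gamma> N \<and> \<delta> k = 2 * \<nu> + Lh + 2 * (onorm A)\<^sup>2 / \<gamma> N
      \<and> norm (z (Suc k)) \<le> min (\<epsilon> / \<gamma> N) (sqrt (2 * \<epsilon> / \<gamma> N))" if k: "Suc N \<le> k" for k
  proof -
    obtain k' where k': "k = Suc k'" using k by (cases k) auto
    have "\<gamma> k = \<gamma> N" and kept: "\<gamma> (Suc k) = \<gamma> k"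
      using N[rule_format, of k] N[rule_format, of "Suc k"] k by simp_all
    then show ?thesis
      using fsps_step_delta[OF steps[of k']] fsps_step_norm_le_safeguard[OF steps[of k] inv(2) kept] k'
      by simp
  qed
  with bounded decreasing inv(2)[of N] show ?thesis by blast
qed

end

lemma ereal_INF_pos_imp_uniform_lower_bound:
  fixes F :: "'a \<Rightarrow> ereal"
  assumes "0 < (INF x\<in>X. F x)"
  shows "\<exists>a::real. 0 < a \<and> (\<forall>x\<in>X. ereal a \<le> F x)"
proof -
  obtain a where "0 < ereal a" and "ereal a < (INF x\<in>X. F x)" using ereal_dense2[OF assms] by blast
  then show ?thesis by (auto intro: order.trans[OF less_imp_le INF_lower])
qed

lemma infdist_less_imp_ex:
  assumes "X \<noteq> {}" and "infdist x X < e"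
  shows "\<exists>y\<in>X. dist x y < e"
proof -
  have "bdd_below (dist x ` X)" by (rule bdd_belowI2[of _ 0]) simp
  then show ?thesis
    using assms cINF_less_iff[OF \<open>X \<noteq> {}\<close>, of "dist x" e] by (simp add: infdist_notempty)
qed

theorem lemma4p3:
  fixes S :: "'n::euclidean_space set"
    and A :: "'n \<Rightarrow> 's::euclidean_space" and K :: "'n \<Rightarrow> 'p::euclidean_space"
    and g :: "'s \<Rightarrow> ereal" and f :: "'p \<Rightarrow> ereal"
    and h :: "'n \<Rightarrow> real" and gradh :: "'n \<Rightarrow> 'n" and U :: "'n set" and Lh :: real
    and ell \<beta> \<nu> q \<delta>0 \<theta>0 \<epsilon> :: real
    and x0 :: 'n and z0 :: 's and u0 :: 'n
  assumes S: "S \<noteq> {}" "convex S" "compact S"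
    and lin: "linear A" "linear K"
    and g: "proper_fun g" "convex_fun g" "lsc_fun g"
    and h: "open U" "S \<subseteq> U" "\<forall>x\<in>U. (h has_derivative (\<lambda>v. gradh x \<bullet> v)) (at x)"
           "Lh-lipschitz_on U gradh"
    and f: "proper_fun f" "convex_fun f" "lsc_fun f"
           "K ` S \<subseteq> interior {w. f w < \<infinity>}" "\<forall>x\<in>S. f (K x) > 0"
    and dom: "\<exists>x\<in>S. g (A x) < \<infinity>"
    and alpha: "(INF x\<in>S. g (A x) + ereal (h x)) > 0"
    and subg: "\<forall>x\<in>S. subdiff g (A x) \<noteq> {}" "ell > 0"
              "\<forall>x\<in>S. infdist 0 (subdiff g (A x)) \<le> ell"
    and par: "0 < \<beta>" "\<beta> < 2" "\<nu> > 0" "0 < q" "q < 1" "\<delta>0 > 0" "\<theta>0 > 0" "\<epsilon> > 0"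
    and x0: "x0 \<in> S"
  shows
    "(\<forall>(k::nat) (x::nat \<Rightarrow> 'n) (z::nat \<Rightarrow> 's) (u::nat \<Rightarrow> 'n) (\<gamma>::nat \<Rightarrow> real) (\<delta>::nat \<Rightarrow> real) (\<theta>::nat \<Rightarrow> real).
        x 0 = x0 \<and> z 0 = z0 \<and> u 0 = u0 \<and> \<gamma> 0 = 1 \<and> \<delta> 0 = \<delta>0 \<and> \<theta> 0 = \<theta>0 \<and>
        (\<forall>i<k. fsps_step S A K g h gradh Lh f \<beta> \<nu> q \<epsilon>
                  (x i) (z i) (u i) (\<gamma> i) (\<delta> i) (\<theta> i)
                  (x (Suc i)) (z (Suc i)) (u (Suc i)) (\<gamma> (Suc i)) (\<delta> (Suc i)) (\<theta> (Suc i)))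
        \<longrightarrow> (\<exists>x' z' u' \<gamma>' \<delta>' \<theta>'. fsps_step S A K g h gradh Lh f \<beta> \<nu> q \<epsilon>
                  (x k) (z k) (u k) (\<gamma> k) (\<delta> k) (\<theta> k) x' z' u' \<gamma>' \<delta>' \<theta>'))
     \<and>
     (\<forall>(x::nat \<Rightarrow> 'n) (z::nat \<Rightarrow> 's) (u::nat \<Rightarrow> 'n) (\<gamma>::nat \<Rightarrow> real) (\<delta>::nat \<Rightarrow> real) (\<theta>::nat \<Rightarrow> real).
        x 0 = x0 \<and> z 0 = z0 \<and> u 0 = u0 \<and> \<gamma> 0 = 1 \<and> \<delta> 0 = \<delta>0 \<and> \<theta> 0 = \<theta>0 \<and>
        (\<forall>i. fsps_step S A K g h gradh Lh f \<beta> \<nu> q \<epsilon>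
                  (x i) (z i) (u i) (\<gamma> i) (\<delta> i) (\<theta> i)
                  (x (Suc i)) (z (Suc i)) (u (Suc i)) (\<gamma> (Suc i)) (\<delta> (Suc i)) (\<theta> (Suc i)))
        \<longrightarrow> (\<forall>k. norm (z (Suc k)) \<le> ell + 1)
          \<and> (\<forall>k. \<gamma> (Suc k) \<le> \<gamma> k)
          \<and> (\<exists>\<gamma>c>0. \<exists>K0. \<forall>k\<ge>K0. \<gamma> k = \<gamma>c
                \<and> \<delta> k = 2 * \<nu> + Lh + 2 * (onorm A) ^ 2 / \<gamma>c
                \<and> norm (z (Suc k)) \<le> min (\<epsilon> / \<gamma>c) (sqrt (2 * \<epsilon> / \<gamma>c))))"
proof -
  obtain a where "0 < a" and a: "\<And>x. x \<in> S \<Longrightarrow> ereal a \<le> g (A x) + ereal (h x)"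
    using ereal_INF_pos_imp_uniform_lower_bound[OF alpha] by blast
  have subgrad: "\<exists>v\<in>subdiff g (A x). norm v \<le> ell + 1" if x: "x \<in> S" for x
  proof -
    have "infdist 0 (subdiff g (A x)) < ell + 1" using subg(3)[rule_format, OF x] by simp
    then obtain v where "v \<in> subdiff g (A x)" and "dist 0 v < ell + 1"
      using infdist_less_imp_ex[OF subg(1)[rule_format, OF x]] by blast
    then show ?thesis by (intro bexI[of _ v]) simp_all
  qed
  interpret fsps_setting S A K g f h gradh Lh \<beta> \<nu> q \<epsilon> a "ell + 1"
  proof unfold_locales
    show "closed S" using S(3) by (rule compact_imp_closed)
    show "0 \<le> Lh" using h(4) by (rule lipschitz_on_nonneg)
    show "\<And>x. x \<in> S \<Longrightarrow> 0 < f (K x)" using f(5) by blast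
    show "0 < ell + 1" "0 \<le> \<nu>" using subg(2) par(3) by simp_all
  qed (fact S(1) g(1) f(1,2,4) \<open>0 < a\<close> a subgrad par(4,5,8))+
  have next_step: "\<exists>x' z' u' \<gamma>' \<delta>' \<theta>'. step (x k) (z k) (u k) (\<gamma> k) (\<delta> k) (\<theta> k) x' z' u' \<gamma>' \<delta>' \<theta>'"
    if "x 0 = x0" "\<gamma> 0 = 1" "\<delta> 0 = \<delta>0" "\<forall>i<k. step_at x z u \<gamma> \<delta> \<theta> i" for k x z u \<gamma> \<delta> \<theta>
  proof -
    have "x k \<in> S" "0 < \<gamma> k" "0 \<le> \<delta> k"
      using iterates_invariant[OF that(4)] that(1-3) x0 par(6) by simp_all
    then show ?thesis by (rule fsps_step_exists)
  qed
  show ?thesis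
  proof (rule conjI; intro allI impI; elim conjE)
  qed (rule next_step, assumption+, erule iterates_eventually_stable, simp_all add: x0 less_imp_le[OF par(6)])
qed

end
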